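(* Let $G$ be a baseline cdf with density $g$, let $\theta>0$, $\lambda\in\mathbb{R}\setminus\{0\}$, and let $0<\alpha_1<\alpha_2$. If $X\sim\mathrm{GMOP\text{-}G}(\theta,\alpha_1,\lambda)$ and $Y\sim\mathrm{GMOP\text{-}G}(\theta,\alpha_2,\lambda)$ (same baseline $G$), then $X\le_{lr}Y$.
   Context: With $\bar\alpha=1-\alpha$, the $\mathrm{GMOP\text{-}G}(\theta,\alpha,\lambda)$ distribution (parameters $\theta>0$, $\alpha>0$, $\lambda\in\mathbb{R}\setminus\{0\}$, baseline cdf $G$ with density $g$) has pdf $$f(t)=\frac{\theta\lambda\alpha^{\theta}(1-e^{-\lambda})g(t)e^{-\lambda G(t)}\left(e^{-\lambda G(t)}-e^{-\lambda}\right)^{\theta-1}}{\left(1-\alpha e^{-\lambda}-\bar\alpha e^{-\lambda G(t)}\right)^{\theta+1}}.$$ For random variables $X$, $Y$ with densities $f_X$, $f_Y$, $X$ is smaller than $Y$ in the likelihood ratio order, $X\le_{lr}Y$, if $f_X(t)/f_Y(t)$ is decreasing in $t$ (on the set where the densities are positive). *)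

theory Defs
  imports "HOL-Analysis.Analysis"
begin

text \<open>The two real powers are taken of absolute values: for lambda > 0 the
  bases are nonnegative (so this is literally the paper's formula); for lambda < 0 both bases
  are nonpositive and the absolute values give the only real-valued reading of the formula.\<close>
definition gmop_pdf ::
  "(real \<Rightarrow> real) \<Rightarrow> (real \<Rightarrow> real) \<Rightarrow> real \<Rightarrow> real \<Rightarrow> real \<Rightarrow> real \<Rightarrow> real" where
  "gmop_pdf G g \<theta> \<alpha> lam t =
     \<theta> * lam * \<alpha> powr \<theta> * (1 - exp (- lam)) * g t * exp (- lam * G t)
       * \<bar>exp (- lam * G t) - exp (- lam)\<bar> powr (\<theta> - 1)
     / \<bar>1 - \<alpha> * exp (- lam) - (1 - \<alpha>) * exp (- lam * G t)\<bar> powr (\<theta> + 1)"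

definition lr_le :: "(real \<Rightarrow> real) \<Rightarrow> (real \<Rightarrow> real) \<Rightarrow> bool" where
  "lr_le fX fY \<longleftrightarrow>
     (\<forall>s t. s \<le> t \<and> fX s > 0 \<and> fY s > 0 \<and> fX t > 0 \<and> fY t > 0
        \<longrightarrow> fX t / fY t \<le> fX s / fY s)"

end

theory Submission
  imports Defs
begin

text \<open>With \<open>c = exp (- lam)\<close>, \<open>u = exp (- lam * G t)\<close> and \<open>w = (1 - u) / (1 - c)\<close>, the
  denominator of the GMOP density is \<open>\<bar>1 - c\<bar> * (\<alpha> + (1 - \<alpha>) * w)\<close>, for either sign of
  \<open>lam\<close>. Everything else in the density is independent of \<open>\<alpha>\<close> apart from \<open>\<alpha> powr \<theta>\<close>, so
  the likelihood ratio is a positive constant times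
  \<open>((\<alpha>\<^sub>2 + (1 - \<alpha>\<^sub>2) * w) / (\<alpha>\<^sub>1 + (1 - \<alpha>\<^sub>1) * w)) powr (\<theta> + 1)\<close>. Since \<open>w\<close> increases
  with \<open>t\<close> from 0 to 1 and the quotient of the two affine functions is decreasing in \<open>w\<close>
  when \<open>\<alpha>\<^sub>1 < \<alpha>\<^sub>2\<close>, the ratio decreases.\<close>

lemma cdf_of_density_mono:
  fixes g G :: "real \<Rightarrow> real"
  assumes "\<And>t. g t \<ge> 0" and "\<And>t. (g has_integral G t) {..t}" and "s \<le> t"
  shows "G s \<le> G t"
  by (rule has_integral_subset_le[OF _ assms(2) assms(2)]) (use assms in auto)

lemma cdf_of_density_nonneg:
  fixes g G :: "real \<Rightarrow> real"
  assumes "\<And>t. g t \<ge> 0" and "\<And>t. (g has_integral G t) {..t}"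
  shows "0 \<le> G t"
  by (rule has_integral_nonneg[OF assms(2)]) (use assms in auto)

lemma cdf_of_density_le_1:
  fixes g G :: "real \<Rightarrow> real"
  assumes "\<And>t. g t \<ge> 0" and "\<And>t. (g has_integral G t) {..t}" and "(g has_integral 1) UNIV"
  shows "G t \<le> 1"
  by (rule has_integral_subset_le[OF _ assms(2) assms(3)]) (use assms in auto)

definition trunc_exp_cdf :: "real \<Rightarrow> real \<Rightarrow> real" where
  "trunc_exp_cdf lam z = (1 - exp (- lam * z)) / (1 - exp (- lam))"

lemma trunc_exp_cdf_0 [simp]: "trunc_exp_cdf lam 0 = 0"
  by (simp add: trunc_exp_cdf_def)

lemma trunc_exp_cdf_1 [simp]: "lam \<noteq> 0 \<Longrightarrow> trunc_exp_cdf lam 1 = 1"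
  by (simp add: trunc_exp_cdf_def)

lemma trunc_exp_cdf_mono:
  assumes "lam \<noteq> 0" and "z \<le> z'"
  shows "trunc_exp_cdf lam z \<le> trunc_exp_cdf lam z'"
proof (cases "lam > 0")
  case True
  then have "exp (- lam) < 1" and "exp (- lam * z') \<le> exp (- lam * z)"
    using assms by simp_all
  then show ?thesis
    unfolding trunc_exp_cdf_def by (intro divide_right_mono) auto
next
  case False
  with assms have "lam < 0" by simp
  then have "1 < exp (- lam)" and "exp (- lam * z) \<le> exp (- lam * z')"
    using assms by (simp_all add: mult_left_mono_neg)
  then show ?thesis
    unfolding trunc_exp_cdf_def by (intro divide_right_mono_neg) auto
qed

lemma trunc_exp_cdf_bounds:
  assumes "lam \<noteq> 0" and "0 \<le> z" and "z \<le> 1"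
  shows "0 \<le> trunc_exp_cdf lam z" and "trunc_exp_cdf lam z \<le> 1"
  using trunc_exp_cdf_mono[OF assms(1) assms(2)] trunc_exp_cdf_mono[OF assms(1) assms(3)]
    assms(1) by simp_all

lemma gmop_denominator_eq:
  assumes "lam \<noteq> 0"
  shows "1 - a * exp (- lam) - (1 - a) * exp (- lam * z)
    = (1 - exp (- lam)) * (a + (1 - a) * trunc_exp_cdf lam z)"
proof -
  have "1 - exp (- lam) \<noteq> 0"
    using assms by simp
  then show ?thesis
    unfolding trunc_exp_cdf_def by (simp add: field_simps)
qed

lemma affine_mix_pos:
  fixes a w :: real
  assumes "0 < a" and "0 \<le> w" and "w \<le> 1"
  shows "0 < a + (1 - a) * w"
proof -
  have "a + (1 - a) * w = (1 - w) * a + w"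
    by (simp add: algebra_simps)
  then show ?thesis
    using assms by (cases "w = 1") (auto intro: add_pos_nonneg)
qed

lemma affine_mix_ratio_antimono:
  fixes a\<^sub>1 a\<^sub>2 w w' :: real
  assumes "0 < a\<^sub>1" and "a\<^sub>1 \<le> a\<^sub>2" and "0 \<le> w" and "w \<le> w'" and "w' \<le> 1"
  shows "(a\<^sub>2 + (1 - a\<^sub>2) * w') / (a\<^sub>1 + (1 - a\<^sub>1) * w')
    \<le> (a\<^sub>2 + (1 - a\<^sub>2) * w) / (a\<^sub>1 + (1 - a\<^sub>1) * w)"
proof -
  have "0 < a\<^sub>1 + (1 - a\<^sub>1) * w" and "0 < a\<^sub>1 + (1 - a\<^sub>1) * w'"
    using assms by (auto intro: affine_mix_pos)
  moreover have "(a\<^sub>2 + (1 - a\<^sub>2) * w) * (a\<^sub>1 + (1 - a\<^sub>1) * w')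
      - (a\<^sub>2 + (1 - a\<^sub>2) * w') * (a\<^sub>1 + (1 - a\<^sub>1) * w) = (a\<^sub>2 - a\<^sub>1) * (w' - w)"
    by (simp add: algebra_simps)
  moreover have "0 \<le> (a\<^sub>2 - a\<^sub>1) * (w' - w)"
    using assms by simp
  ultimately show ?thesis
    by (simp add: divide_simps)
qed

lemma gmop_pdf_ratio:
  assumes "lam \<noteq> 0" and "0 \<le> G x" and "G x \<le> 1" and "0 < a\<^sub>1" and "0 < a\<^sub>2"
    and "gmop_pdf G g \<theta> a\<^sub>2 lam x \<noteq> 0"
  defines "w \<equiv> trunc_exp_cdf lam (G x)"
  shows "gmop_pdf G g \<theta> a\<^sub>1 lam x / gmop_pdf G g \<theta> a\<^sub>2 lam x
    = (a\<^sub>1 / a\<^sub>2) powr \<theta> * ((a\<^sub>2 + (1 - a\<^sub>2) * w) / (a\<^sub>1 + (1 - a\<^sub>1) * w)) powr (\<theta> + 1)"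
proof -
  define K where "K = \<theta> * lam * (1 - exp (- lam)) * g x * exp (- lam * G x)
    * \<bar>exp (- lam * G x) - exp (- lam)\<bar> powr (\<theta> - 1) / \<bar>1 - exp (- lam)\<bar> powr (\<theta> + 1)"
  have w_bounds: "0 \<le> w" "w \<le> 1"
    unfolding w_def using trunc_exp_cdf_bounds assms(1-3) by auto
  have pdf_eq: "gmop_pdf G g \<theta> a lam x = a powr \<theta> * K / (a + (1 - a) * w) powr (\<theta> + 1)"
    if "0 < a" for a
  proof -
    have "0 < a + (1 - a) * w"
      using affine_mix_pos[OF that w_bounds] .
    then have "\<bar>1 - a * exp (- lam) - (1 - a) * exp (- lam * G x)\<bar> powr (\<theta> + 1)
        = \<bar>1 - exp (- lam)\<bar> powr (\<theta> + 1) * (a + (1 - a) * w) powr (\<theta> + 1)"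
      unfolding gmop_denominator_eq[OF assms(1)] w_def
      by (simp add: abs_mult powr_mult)
    then show ?thesis
      unfolding gmop_pdf_def K_def by simp
  qed
  have "K \<noteq> 0"
    using assms(5,6) pdf_eq by auto
  then show ?thesis
    using assms(4,5) by (simp add: pdf_eq powr_divide)
qed

theorem theorem1:
  fixes G g :: "real \<Rightarrow> real" and \<theta> lam \<alpha>\<^sub>1 \<alpha>\<^sub>2 :: real
  assumes g_nonneg: "\<And>t. g t \<ge> 0"
    and G_cdf: "\<And>t. (g has_integral G t) {..t}"
    and g_total: "(g has_integral 1) UNIV"
    and "\<theta> > 0" and "lam \<noteq> 0"
    and "0 < \<alpha>\<^sub>1" and "\<alpha>\<^sub>1 < \<alpha>\<^sub>2"
  shows "lr_le (gmop_pdf G g \<theta> \<alpha>\<^sub>1 lam) (gmop_pdf G g \<theta> \<alpha>\<^sub>2 lam)"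
  unfolding lr_le_def
proof (intro allI impI, elim conjE)
  fix s t
  assume "s \<le> t" "gmop_pdf G g \<theta> \<alpha>\<^sub>2 lam s > 0" "gmop_pdf G g \<theta> \<alpha>\<^sub>2 lam t > 0"
  define w where "w x = trunc_exp_cdf lam (G x)" for x
  define q where "q x = (\<alpha>\<^sub>2 + (1 - \<alpha>\<^sub>2) * w x) / (\<alpha>\<^sub>1 + (1 - \<alpha>\<^sub>1) * w x)" for x
  have G_bounds: "0 \<le> G x" "G x \<le> 1" for x
    using cdf_of_density_nonneg[OF g_nonneg G_cdf] cdf_of_density_le_1[OF g_nonneg G_cdf g_total]
    by auto
  have ratio: "gmop_pdf G g \<theta> \<alpha>\<^sub>1 lam x / gmop_pdf G g \<theta> \<alpha>\<^sub>2 lam x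
      = (\<alpha>\<^sub>1 / \<alpha>\<^sub>2) powr \<theta> * q x powr (\<theta> + 1)" if "gmop_pdf G g \<theta> \<alpha>\<^sub>2 lam x > 0" for x
    unfolding q_def w_def using gmop_pdf_ratio G_bounds assms(5-7) that by simp
  have "w s \<le> w t"
    unfolding w_def using trunc_exp_cdf_mono cdf_of_density_mono assms(1,2,5) \<open>s \<le> t\<close> by blast
  then have "q t \<le> q s"
    unfolding q_def using affine_mix_ratio_antimono trunc_exp_cdf_bounds G_bounds assms(5-7)
    by (simp add: w_def)
  moreover have "0 \<le> q t"
    unfolding q_def w_def using affine_mix_pos trunc_exp_cdf_bounds G_bounds assms(5-7)
    by (simp add: less_imp_le)
  ultimately show "gmop_pdf G g \<theta> \<alpha>\<^sub>1 lam t / gmop_pdf G g \<theta> \<alpha>\<^sub>2 lam t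
      \<le> gmop_pdf G g \<theta> \<alpha>\<^sub>1 lam s / gmop_pdf G g \<theta> \<alpha>\<^sub>2 lam s"
    using ratio \<open>gmop_pdf G g \<theta> \<alpha>\<^sub>2 lam s > 0\<close> \<open>gmop_pdf G g \<theta> \<alpha>\<^sub>2 lam t > 0\<close> \<open>\<theta> > 0\<close>
    by (simp add: mult_left_mono powr_mono2)
qed

end
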